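(* Let $(\Omega,\mathcal{F})$ be a measurable space, $\mathrm{B}_b$ the space of bounded real-valued measurable functions, $C\subset\mathrm{B}_b$ a linear subspace containing the constants, and $H\colon C\to\mathbb{R}$ a sublinear premium principle, i.e. a convex premium principle with $H(\lambda X)=\lambda H(X)$ for all $X\in C$, $\lambda>0$. Then $R_{\mathrm{Max}}(X):=\inf\{H(X_0)\mid X_0\in C,\ X_0\ge X\}$ is a coherent risk measure given by $$R_{\mathrm{Max}}(X)=\max_{\mathbb{P}\in\mathcal{P}}\mathbb{E}_{\mathbb{P}}(X)\quad\text{for all }X\in\mathrm{B}_b,$$ where $\mathcal{P}=\{\mathbb{P}\in\mathrm{ba}_+^1\mid \mathbb{E}_{\mathbb{P}}(X)\le H(X)\text{ for all }X\in C\}$.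
   Context: A premium principle is a map $H\colon C\to\mathbb{R}$ with $H(X+m)=H(X)+m$ for $X\in C$, $m\in\mathbb{R}$, $H(0)=0$, and $H(X)\ge0$ for $X\in C$ with $X\ge0$ (pointwise order). Convex means $H(\lambda X+(1-\lambda)Y)\le\lambda H(X)+(1-\lambda)H(Y)$ for $\lambda\in[0,1]$. $\mathrm{ba}_+^1$ is the set of finitely additive probability measures on $(\Omega,\mathcal{F})$ and $\mathbb{E}_{\mathbb{P}}$ the associated integral. *)

theory Defs
  imports "HOL-Probability.Probability"
begin

definition Bb :: "'a measure \<Rightarrow> ('a \<Rightarrow> real) set" where
  "Bb M = {X. X \<in> borel_measurable M \<and> bounded (X ` space M)}"

text \<open>Finitely additive probability measures (ba_+^1) on (space M, sets M),
  represented as set functions vanishing outside sets M.\<close>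
definition ba1 :: "'a measure \<Rightarrow> ('a set \<Rightarrow> real) set" where
  "ba1 M = {P. (\<forall>A\<in>sets M. 0 \<le> P A) \<and> P (space M) = 1
     \<and> (\<forall>A\<in>sets M. \<forall>B\<in>sets M. A \<inter> B = {} \<longrightarrow> P (A \<union> B) = P A + P B)
     \<and> (\<forall>A. A \<notin> sets M \<longrightarrow> P A = 0)}"

definition simple_fn :: "'a measure \<Rightarrow> ('a \<Rightarrow> real) \<Rightarrow> bool" where
  "simple_fn M s \<longleftrightarrow> s \<in> borel_measurable M \<and> finite (s ` space M)"

definition simple_int :: "'a measure \<Rightarrow> ('a set \<Rightarrow> real) \<Rightarrow> ('a \<Rightarrow> real) \<Rightarrow> real" where
  "simple_int M P s = (\<Sum>y\<in>s ` space M. y * P (s -` {y} \<inter> space M))"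

definition fa_expect :: "'a measure \<Rightarrow> ('a set \<Rightarrow> real) \<Rightarrow> ('a \<Rightarrow> real) \<Rightarrow> real" where
  "fa_expect M P X = Sup {simple_int M P s | s. simple_fn M s \<and> (\<forall>\<omega>\<in>space M. s \<omega> \<le> X \<omega>)}"

definition premium_principle :: "'a measure \<Rightarrow> ('a \<Rightarrow> real) set \<Rightarrow> (('a \<Rightarrow> real) \<Rightarrow> real) \<Rightarrow> bool" where
  "premium_principle M C H \<longleftrightarrow>
     (\<forall>X\<in>C. \<forall>m::real. H (\<lambda>\<omega>. X \<omega> + m) = H X + m) \<and> H (\<lambda>\<omega>. 0) = 0 \<and>
     (\<forall>X\<in>C. (\<forall>\<omega>\<in>space M. 0 \<le> X \<omega>) \<longrightarrow> 0 \<le> H X)"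

definition convex_on_C :: "('a \<Rightarrow> real) set \<Rightarrow> (('a \<Rightarrow> real) \<Rightarrow> real) \<Rightarrow> bool" where
  "convex_on_C C H \<longleftrightarrow> (\<forall>X\<in>C. \<forall>Y\<in>C. \<forall>l::real. 0 \<le> l \<and> l \<le> 1 \<longrightarrow>
      H (\<lambda>\<omega>. l * X \<omega> + (1 - l) * Y \<omega>) \<le> l * H X + (1 - l) * H Y)"

definition sublinear_premium_principle :: "'a measure \<Rightarrow> ('a \<Rightarrow> real) set \<Rightarrow> (('a \<Rightarrow> real) \<Rightarrow> real) \<Rightarrow> bool" where
  "sublinear_premium_principle M C H \<longleftrightarrow> premium_principle M C H \<and> convex_on_C C H \<and>
     (\<forall>X\<in>C. \<forall>l::real. 0 < l \<longrightarrow> H (\<lambda>\<omega>. l * X \<omega>) = l * H X)"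

text \<open>Coherent risk measure on Bb M (loss convention): monotone, cash additive,
  positively homogeneous, subadditive.\<close>
definition coherent_risk_measure :: "'a measure \<Rightarrow> (('a \<Rightarrow> real) \<Rightarrow> real) \<Rightarrow> bool" where
  "coherent_risk_measure M R \<longleftrightarrow>
     (\<forall>X\<in>Bb M. \<forall>Y\<in>Bb M. (\<forall>\<omega>\<in>space M. X \<omega> \<le> Y \<omega>) \<longrightarrow> R X \<le> R Y) \<and>
     (\<forall>X\<in>Bb M. \<forall>m::real. R (\<lambda>\<omega>. X \<omega> + m) = R X + m) \<and>
     (\<forall>X\<in>Bb M. \<forall>l::real. 0 < l \<longrightarrow> R (\<lambda>\<omega>. l * X \<omega>) = l * R X) \<and>
     (\<forall>X\<in>Bb M. \<forall>Y\<in>Bb M. R (\<lambda>\<omega>. X \<omega> + Y \<omega>) \<le> R X + R Y)"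

end

theory Submission
  imports Defs
begin

text \<open>\<open>R_max\<close> inherits monotonicity, cash additivity, positive homogeneity and subadditivity
  from \<open>H\<close> by passing to infima over dominating elements of \<open>C\<close>; so it is a coherent risk
  measure and a sublinear functional on \<open>B_b\<close>. Every \<open>P \<in> \<P>\<close> satisfies
  \<open>E_P X \<le> E_P X0 \<le> H X0\<close> for all \<open>X0 \<in> C\<close> with \<open>X0 \<ge> X\<close>, hence \<open>E_P \<le> R_max\<close>.
  Conversely, for fixed \<open>X\<close> the Hahn--Banach theorem (proved by Zorn's lemma on graphs of
  dominated linear functionals) yields a linear \<open>L \<le> R_max\<close> on \<open>B_b\<close> with
  \<open>L X = R_max X\<close>. Domination by \<open>R_max\<close> forces \<open>L\<close> to be monotone with \<open>L 1 = 1\<close>, so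
  \<open>P A = L (indicator A)\<close> is a finitely additive probability; approximating from below by
  simple functions shows \<open>E_P = L\<close>, and \<open>L \<le> R_max \<le> H\<close> on \<open>C\<close> puts \<open>P\<close> in \<open>\<P>\<close>.\<close>

section \<open>Hahn--Banach for spaces of real functions\<close>

definition fun_subspace :: "('a \<Rightarrow> real) set \<Rightarrow> bool" where
  "fun_subspace V \<longleftrightarrow> (\<lambda>\<omega>. 0) \<in> V \<and>
     (\<forall>X\<in>V. \<forall>Y\<in>V. (\<lambda>\<omega>. X \<omega> + Y \<omega>) \<in> V) \<and> (\<forall>X\<in>V. \<forall>c. (\<lambda>\<omega>. c * X \<omega>) \<in> V)"

definition sublinear_on :: "('a \<Rightarrow> real) set \<Rightarrow> (('a \<Rightarrow> real) \<Rightarrow> real) \<Rightarrow> bool" where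
  "sublinear_on V p \<longleftrightarrow> (\<forall>X\<in>V. \<forall>Y\<in>V. p (\<lambda>\<omega>. X \<omega> + Y \<omega>) \<le> p X + p Y) \<and>
     (\<forall>X\<in>V. \<forall>c>0. p (\<lambda>\<omega>. c * X \<omega>) = c * p X)"

definition linear_functional_on :: "('a \<Rightarrow> real) set \<Rightarrow> (('a \<Rightarrow> real) \<Rightarrow> real) \<Rightarrow> bool" where
  "linear_functional_on V L \<longleftrightarrow> (\<forall>X\<in>V. \<forall>Y\<in>V. L (\<lambda>\<omega>. X \<omega> + Y \<omega>) = L X + L Y) \<and>
     (\<forall>X\<in>V. \<forall>c. L (\<lambda>\<omega>. c * X \<omega>) = c * L X)"

text \<open>Partial linear functionals below \<open>p\<close> are represented by their graphs, so that Zorn's lemma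
  applies to sets ordered by inclusion. Single-valuedness need not be required: it follows from
  domination (\<open>dominated_linear_graph_unique\<close>).\<close>
definition dominated_linear_graph ::
    "('a \<Rightarrow> real) set \<Rightarrow> (('a \<Rightarrow> real) \<Rightarrow> real) \<Rightarrow> (('a \<Rightarrow> real) \<times> real) set \<Rightarrow> bool" where
  "dominated_linear_graph V p G \<longleftrightarrow>
     (\<forall>X a Y b. (X, a) \<in> G \<longrightarrow> (Y, b) \<in> G \<longrightarrow> ((\<lambda>\<omega>. X \<omega> + Y \<omega>), a + b) \<in> G) \<and>
     (\<forall>X a c. (X, a) \<in> G \<longrightarrow> ((\<lambda>\<omega>. c * X \<omega>), c * a) \<in> G) \<and>
     (\<forall>X a. (X, a) \<in> G \<longrightarrow> X \<in> V \<and> a \<le> p X)"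

lemma dominated_linear_graphI:
  assumes "\<And>X a Y b. (X, a) \<in> G \<Longrightarrow> (Y, b) \<in> G \<Longrightarrow> ((\<lambda>\<omega>. X \<omega> + Y \<omega>), a + b) \<in> G"
    and "\<And>X a c. (X, a) \<in> G \<Longrightarrow> ((\<lambda>\<omega>. c * X \<omega>), c * a) \<in> G"
    and "\<And>X a. (X, a) \<in> G \<Longrightarrow> X \<in> V" and "\<And>X a. (X, a) \<in> G \<Longrightarrow> a \<le> p X"
  shows "dominated_linear_graph V p G"
  using assms unfolding dominated_linear_graph_def by blast

lemma dominated_linear_graphD:
  assumes "dominated_linear_graph V p G"
  shows dominated_linear_graph_add: "\<And>X a Y b. (X, a) \<in> G \<Longrightarrow> (Y, b) \<in> G \<Longrightarrow> ((\<lambda>\<omega>. X \<omega> + Y \<omega>), a + b) \<in> G"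
    and dominated_linear_graph_scale: "\<And>X a c. (X, a) \<in> G \<Longrightarrow> ((\<lambda>\<omega>. c * X \<omega>), c * a) \<in> G"
    and dominated_linear_graph_in: "\<And>X a. (X, a) \<in> G \<Longrightarrow> X \<in> V"
    and dominated_linear_graph_le: "\<And>X a. (X, a) \<in> G \<Longrightarrow> a \<le> p X"
  using assms unfolding dominated_linear_graph_def by blast+

lemma linear_functional_on_add: "linear_functional_on V L \<Longrightarrow> X \<in> V \<Longrightarrow> Y \<in> V \<Longrightarrow> L (\<lambda>\<omega>. X \<omega> + Y \<omega>) = L X + L Y"
  and linear_functional_on_scale: "linear_functional_on V L \<Longrightarrow> X \<in> V \<Longrightarrow> L (\<lambda>\<omega>. c * X \<omega>) = c * L X"
  unfolding linear_functional_on_def by blast+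

context
  fixes V :: "('a \<Rightarrow> real) set"
  assumes V: "fun_subspace V"
begin

lemma fun_subspace_zero: "(\<lambda>\<omega>. 0) \<in> V"
  and fun_subspace_add: "X \<in> V \<Longrightarrow> Y \<in> V \<Longrightarrow> (\<lambda>\<omega>. X \<omega> + Y \<omega>) \<in> V"
  and fun_subspace_scale: "X \<in> V \<Longrightarrow> (\<lambda>\<omega>. c * X \<omega>) \<in> V"
  using V unfolding fun_subspace_def by blast+

lemma fun_subspace_diff: "X \<in> V \<Longrightarrow> Y \<in> V \<Longrightarrow> (\<lambda>\<omega>. X \<omega> - Y \<omega>) \<in> V"
  using fun_subspace_add[OF _ fun_subspace_scale[of Y "-1"]] by simp

lemma linear_functional_on_sum:
  assumes L: "linear_functional_on V L" and "finite F" "\<And>i. i \<in> F \<Longrightarrow> X i \<in> V"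
  shows "(\<lambda>\<omega>. \<Sum>i\<in>F. X i \<omega>) \<in> V \<and> L (\<lambda>\<omega>. \<Sum>i\<in>F. X i \<omega>) = (\<Sum>i\<in>F. L (X i))"
  using assms(2,3)
proof (induction F rule: finite_induct)
  case empty
  show ?case
    using fun_subspace_zero linear_functional_on_scale[OF L fun_subspace_zero, of 0] by simp
next
  case (insert i F)
  then show ?case
    using fun_subspace_add linear_functional_on_add[OF L] by simp
qed

end

context
  fixes V :: "('a \<Rightarrow> real) set" and p :: "('a \<Rightarrow> real) \<Rightarrow> real"
  assumes V: "fun_subspace V" and p: "sublinear_on V p"
begin

lemma sublinear_on_add: "X \<in> V \<Longrightarrow> Y \<in> V \<Longrightarrow> p (\<lambda>\<omega>. X \<omega> + Y \<omega>) \<le> p X + p Y"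
  and sublinear_on_scale: "X \<in> V \<Longrightarrow> 0 < c \<Longrightarrow> p (\<lambda>\<omega>. c * X \<omega>) = c * p X"
  using p unfolding sublinear_on_def by blast+

lemma sublinear_on_zero: "p (\<lambda>\<omega>. 0) = 0"
  using sublinear_on_scale[OF fun_subspace_zero[OF V], of 2] by simp

lemma dominated_linear_graph_unique:
  assumes G: "dominated_linear_graph V p G" and "(X, a) \<in> G" "(X, b) \<in> G"
  shows "a = b"
proof -
  have "a + -1 * b \<le> 0" if "(X, a) \<in> G" "(X, b) \<in> G" for a b
    using dominated_linear_graph_le[OF G dominated_linear_graph_add[OF G that(1)
          dominated_linear_graph_scale[OF G that(2), of "-1"]]]
    by (simp add: sublinear_on_zero)
  from this[OF assms(2,3)] this[OF assms(3,2)] show ?thesis by simp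
qed

lemma dominated_linear_graph_Union:
  assumes "\<C> \<noteq> {}" and "\<And>G. G \<in> \<C> \<Longrightarrow> dominated_linear_graph V p G"
    and "\<And>G G'. G \<in> \<C> \<Longrightarrow> G' \<in> \<C> \<Longrightarrow> G \<subseteq> G' \<or> G' \<subseteq> G"
  shows "dominated_linear_graph V p (\<Union>\<C>)"
proof (rule dominated_linear_graphI)
  fix X a Y b assume "(X, a) \<in> \<Union>\<C>" "(Y, b) \<in> \<Union>\<C>"
  then obtain G G' where "G \<in> \<C>" "G' \<in> \<C>" "(X, a) \<in> G" "(Y, b) \<in> G'" by blast
  with assms(2)[of G] assms(2)[of G'] assms(3)[of G G'] show "((\<lambda>\<omega>. X \<omega> + Y \<omega>), a + b) \<in> \<Union>\<C>"
    by (blast dest: dominated_linear_graph_add)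
qed (use assms(2) in \<open>blast dest: dominated_linear_graphD\<close>)+

lemma dominated_linear_graph_separating_constant:
  assumes G: "dominated_linear_graph V p G" "G \<noteq> {}" and y: "y \<in> V"
  obtains c where "\<And>X a. (X, a) \<in> G \<Longrightarrow> a - p (\<lambda>\<omega>. X \<omega> - y \<omega>) \<le> c"
    and "\<And>X a. (X, a) \<in> G \<Longrightarrow> c \<le> p (\<lambda>\<omega>. X \<omega> + y \<omega>) - a"
proof -
  define D where "D = {a - p (\<lambda>\<omega>. X \<omega> - y \<omega>) | X a. (X, a) \<in> G}"
  have below: "a - p (\<lambda>\<omega>. X \<omega> - y \<omega>) \<le> p (\<lambda>\<omega>. X' \<omega> + y \<omega>) - a'"
    if XG: "(X, a) \<in> G" and X'G: "(X', a') \<in> G" for X a X' a'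
  proof -
    have XV: "X \<in> V" "X' \<in> V"
      using XG X'G by (auto intro: dominated_linear_graph_in[OF G(1)])
    have "a + a' \<le> p (\<lambda>\<omega>. X \<omega> + X' \<omega>)"
      using dominated_linear_graph_le[OF G(1) dominated_linear_graph_add[OF G(1) XG X'G]] .
    also have "(\<lambda>\<omega>. X \<omega> + X' \<omega>) = (\<lambda>\<omega>. (X \<omega> - y \<omega>) + (X' \<omega> + y \<omega>))"
      by simp
    also have "p \<dots> \<le> p (\<lambda>\<omega>. X \<omega> - y \<omega>) + p (\<lambda>\<omega>. X' \<omega> + y \<omega>)"
      using sublinear_on_add[OF fun_subspace_diff[OF V XV(1) y] fun_subspace_add[OF V XV(2) y]] .
    finally show ?thesis by simp
  qed
  have "D \<noteq> {}" using G(2) unfolding D_def by auto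
  moreover have "bdd_above D"
    using G(2) below unfolding D_def bdd_above_def by fast
  ultimately show thesis
    using that[of "Sup D"] below unfolding D_def
    by (auto intro!: cSup_upper cSup_least)
qed

lemma dominated_linear_graph_extension_le:
  assumes G: "dominated_linear_graph V p G" and y: "y \<in> V"
    and lo: "\<And>X a. (X, a) \<in> G \<Longrightarrow> a - p (\<lambda>\<omega>. X \<omega> - y \<omega>) \<le> c"
    and hi: "\<And>X a. (X, a) \<in> G \<Longrightarrow> c \<le> p (\<lambda>\<omega>. X \<omega> + y \<omega>) - a"
    and XG: "(X, a) \<in> G"
  shows "a + t * c \<le> p (\<lambda>\<omega>. X \<omega> + t * y \<omega>)"
  \<comment> \<open>rescaling \<open>(X, a)\<close> by \<open>1 / \<bar>t\<bar>\<close> reduces the claim to the bounds on \<open>c\<close>, i.e. to \<open>t = \<plusminus>1\<close>\<close>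
proof (cases t "0::real" rule: linorder_cases)
  case equal
  then show ?thesis using dominated_linear_graph_le[OF G XG] by simp
next
  case greater
  have XG': "((\<lambda>\<omega>. (1 / t) * X \<omega>), (1 / t) * a) \<in> G"
    using dominated_linear_graph_scale[OF G XG] .
  have XV: "(\<lambda>\<omega>. (1 / t) * X \<omega>) \<in> V" using dominated_linear_graph_in[OF G XG'] .
  have "a + t * c = t * ((1 / t) * a + c)" using greater by (simp add: field_simps)
  also have "\<dots> \<le> t * p (\<lambda>\<omega>. (1 / t) * X \<omega> + y \<omega>)"
    using hi[OF XG'] greater by simp
  also have "\<dots> = p (\<lambda>\<omega>. t * ((1 / t) * X \<omega> + y \<omega>))"
    using sublinear_on_scale[OF fun_subspace_add[OF V XV y] greater] by simp
  also have "(\<lambda>\<omega>. t * ((1 / t) * X \<omega> + y \<omega>)) = (\<lambda>\<omega>. X \<omega> + t * y \<omega>)"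
    using greater by (simp add: algebra_simps)
  finally show ?thesis .
next
  case less
  define s where "s = - t"
  have s: "0 < s" using less by (simp add: s_def)
  have XG': "((\<lambda>\<omega>. (1 / s) * X \<omega>), (1 / s) * a) \<in> G"
    using dominated_linear_graph_scale[OF G XG] .
  have XV: "(\<lambda>\<omega>. (1 / s) * X \<omega>) \<in> V" using dominated_linear_graph_in[OF G XG'] .
  have "a + t * c = s * ((1 / s) * a - c)" using s by (simp add: s_def field_simps)
  also have "\<dots> \<le> s * p (\<lambda>\<omega>. (1 / s) * X \<omega> - y \<omega>)"
    using lo[OF XG'] s by simp
  also have "\<dots> = p (\<lambda>\<omega>. s * ((1 / s) * X \<omega> - y \<omega>))"
    using sublinear_on_scale[OF fun_subspace_diff[OF V XV y] s] by simp
  also have "(\<lambda>\<omega>. s * ((1 / s) * X \<omega> - y \<omega>)) = (\<lambda>\<omega>. X \<omega> + t * y \<omega>)"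
    using s by (simp add: s_def algebra_simps)
  finally show ?thesis .
qed

lemma dominated_linear_graph_adjoin:
  assumes G: "dominated_linear_graph V p G" and y: "y \<in> V"
    and le: "\<And>X a t. (X, a) \<in> G \<Longrightarrow> a + t * c \<le> p (\<lambda>\<omega>. X \<omega> + t * y \<omega>)"
  shows "dominated_linear_graph V p {((\<lambda>\<omega>. X \<omega> + t * y \<omega>), a + t * c) | X a t. (X, a) \<in> G}"
    (is "dominated_linear_graph V p ?G'")
proof -
  have G'I: "((\<lambda>\<omega>. X \<omega> + t * y \<omega>), a + t * c) \<in> ?G'" if "(X, a) \<in> G" for X a t
    using that by blast
  have G'E: "(\<And>X a t. (X, a) \<in> G \<Longrightarrow> Z = (\<lambda>\<omega>. X \<omega> + t * y \<omega>) \<Longrightarrow> b = a + t * c \<Longrightarrow> thesis)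
      \<Longrightarrow> thesis" if "(Z, b) \<in> ?G'" for Z b thesis
    using that by blast
  show ?thesis
  proof (rule dominated_linear_graphI)
    fix Z b Z' b' assume "(Z, b) \<in> ?G'" "(Z', b') \<in> ?G'"
    obtain X a t where XG: "(X, a) \<in> G" and Z: "Z = (\<lambda>\<omega>. X \<omega> + t * y \<omega>)" "b = a + t * c"
      using G'E[OF \<open>(Z, b) \<in> ?G'\<close>] .
    obtain X' a' t' where X'G: "(X', a') \<in> G" and Z': "Z' = (\<lambda>\<omega>. X' \<omega> + t' * y \<omega>)" "b' = a' + t' * c"
      using G'E[OF \<open>(Z', b') \<in> ?G'\<close>] .
    have "((\<lambda>\<omega>. (X \<omega> + X' \<omega>) + (t + t') * y \<omega>), (a + a') + (t + t') * c) \<in> ?G'"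
      using G'I[OF dominated_linear_graph_add[OF G XG X'G]] by simp
    moreover have "(\<lambda>\<omega>. (X \<omega> + X' \<omega>) + (t + t') * y \<omega>) = (\<lambda>\<omega>. Z \<omega> + Z' \<omega>)"
      and "(a + a') + (t + t') * c = b + b'"
      by (simp_all add: Z Z' algebra_simps)
    ultimately show "((\<lambda>\<omega>. Z \<omega> + Z' \<omega>), b + b') \<in> ?G'" by simp
  next
    fix Z b d assume "(Z, b) \<in> ?G'"
    then obtain X a t where XG: "(X, a) \<in> G" and Z: "Z = (\<lambda>\<omega>. X \<omega> + t * y \<omega>)" "b = a + t * c"
      by (rule G'E)
    have "((\<lambda>\<omega>. d * X \<omega> + (d * t) * y \<omega>), d * a + (d * t) * c) \<in> ?G'"
      using G'I[OF dominated_linear_graph_scale[OF G XG]] by simp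
    moreover have "(\<lambda>\<omega>. d * X \<omega> + (d * t) * y \<omega>) = (\<lambda>\<omega>. d * Z \<omega>)"
      and "d * a + (d * t) * c = d * b"
      by (simp_all add: Z algebra_simps)
    ultimately show "((\<lambda>\<omega>. d * Z \<omega>), d * b) \<in> ?G'" by simp
  next
    fix Z b assume "(Z, b) \<in> ?G'"
    then obtain X a t where XG: "(X, a) \<in> G" and "Z = (\<lambda>\<omega>. X \<omega> + t * y \<omega>)" "b = a + t * c"
      by (rule G'E)
    then show "Z \<in> V" "b \<le> p Z"
      using le[OF XG]
        fun_subspace_add[OF V dominated_linear_graph_in[OF G XG] fun_subspace_scale[OF V y]] by simp_all
  qed
qed

lemma dominated_linear_graph_extend:
  assumes G: "dominated_linear_graph V p G" "G \<noteq> {}" and y: "y \<in> V"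
  obtains G' where "dominated_linear_graph V p G'" "G \<subseteq> G'" "y \<in> Domain G'"
proof -
  obtain c where "\<And>X a. (X, a) \<in> G \<Longrightarrow> a - p (\<lambda>\<omega>. X \<omega> - y \<omega>) \<le> c"
    and "\<And>X a. (X, a) \<in> G \<Longrightarrow> c \<le> p (\<lambda>\<omega>. X \<omega> + y \<omega>) - a"
    using dominated_linear_graph_separating_constant[OF G y] by blast
  then have "\<And>X a t. (X, a) \<in> G \<Longrightarrow> a + t * c \<le> p (\<lambda>\<omega>. X \<omega> + t * y \<omega>)"
    using dominated_linear_graph_extension_le[OF G(1) y] by blast
  from dominated_linear_graph_adjoin[OF G(1) y this]
  have "dominated_linear_graph V p {((\<lambda>\<omega>. X \<omega> + t * y \<omega>), a + t * c) | X a t. (X, a) \<in> G}" .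
  moreover have "G \<subseteq> {((\<lambda>\<omega>. X \<omega> + t * y \<omega>), a + t * c) | X a t. (X, a) \<in> G}"
    by force
  moreover have "y \<in> Domain {((\<lambda>\<omega>. X \<omega> + t * y \<omega>), a + t * c) | X a t. (X, a) \<in> G}"
  proof -
    obtain X a where "(X, a) \<in> G" using G(2) by auto
    then have "((\<lambda>\<omega>. 0 * X \<omega>), 0 * a) \<in> G" by (rule dominated_linear_graph_scale[OF G(1)])
    then have "((\<lambda>\<omega>. 0 + 1 * y \<omega>), 0 + 1 * c) \<in> {((\<lambda>\<omega>. X \<omega> + t * y \<omega>), a + t * c) | X a t. (X, a) \<in> G}"
      by force
    then show ?thesis by auto
  qed
  ultimately show thesis by (rule that)
qed

lemma dominated_linear_graph_ray:
  assumes x0: "x0 \<in> V"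
  shows "dominated_linear_graph V p {((\<lambda>\<omega>. t * x0 \<omega>), t * p x0) | t. True}"
proof (rule dominated_linear_graphI)
  fix X a Y b assume "(X, a) \<in> {((\<lambda>\<omega>. t * x0 \<omega>), t * p x0) | t. True}"
    "(Y, b) \<in> {((\<lambda>\<omega>. t * x0 \<omega>), t * p x0) | t. True}"
  then obtain t s where "X = (\<lambda>\<omega>. t * x0 \<omega>)" "a = t * p x0" "Y = (\<lambda>\<omega>. s * x0 \<omega>)" "b = s * p x0"
    by blast
  then show "((\<lambda>\<omega>. X \<omega> + Y \<omega>), a + b) \<in> {((\<lambda>\<omega>. t * x0 \<omega>), t * p x0) | t. True}"
    by (auto intro!: exI[of _ "t + s"] simp: algebra_simps)
next
  fix X a d assume "(X, a) \<in> {((\<lambda>\<omega>. t * x0 \<omega>), t * p x0) | t. True}"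
  then obtain t where "X = (\<lambda>\<omega>. t * x0 \<omega>)" "a = t * p x0" by blast
  then show "((\<lambda>\<omega>. d * X \<omega>), d * a) \<in> {((\<lambda>\<omega>. t * x0 \<omega>), t * p x0) | t. True}"
    by (auto intro!: exI[of _ "d * t"])
next
  fix X a assume "(X, a) \<in> {((\<lambda>\<omega>. t * x0 \<omega>), t * p x0) | t. True}"
  then obtain t where X: "X = (\<lambda>\<omega>. t * x0 \<omega>)" "a = t * p x0" by blast
  show "X \<in> V" using X fun_subspace_scale[OF V x0] by simp
  show "a \<le> p X"
  proof (cases t "0::real" rule: linorder_cases)
    case less
    have "0 = p (\<lambda>\<omega>. t * x0 \<omega> + (- t) * x0 \<omega>)" using sublinear_on_zero by simp
    also have "\<dots> \<le> p (\<lambda>\<omega>. t * x0 \<omega>) + p (\<lambda>\<omega>. (- t) * x0 \<omega>)"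
      using sublinear_on_add[OF fun_subspace_scale[OF V x0] fun_subspace_scale[OF V x0]] .
    also have "p (\<lambda>\<omega>. (- t) * x0 \<omega>) = - t * p x0" using sublinear_on_scale[OF x0, of "- t"] less by simp
    finally show ?thesis using X by simp
  qed (use X sublinear_on_zero sublinear_on_scale[OF x0] in auto)
qed

lemma dominated_linear_graph_total_extension:
  assumes G0: "dominated_linear_graph V p G0" "G0 \<noteq> {}"
  obtains G where "dominated_linear_graph V p G" "G0 \<subseteq> G" "V \<subseteq> Domain G"
proof -
  define \<A> where "\<A> = {G. dominated_linear_graph V p G \<and> G0 \<subseteq> G}"
  have "\<exists>G\<in>\<A>. \<forall>G'\<in>\<A>. G \<subseteq> G' \<longrightarrow> G' = G"
  proof (rule subset_Zorn_nonempty)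
    show "\<A> \<noteq> {}" using G0 unfolding \<A>_def by blast
  next
    fix \<C> assume ne: "\<C> \<noteq> {}" and chain: "subset.chain \<A> \<C>"
    have "dominated_linear_graph V p (\<Union>\<C>)"
      using chain unfolding subset.chain_def \<A>_def
      by (intro dominated_linear_graph_Union[OF ne]) blast+
    moreover have "G0 \<subseteq> \<Union>\<C>"
      using ne chain unfolding subset.chain_def \<A>_def by blast
    ultimately show "\<Union>\<C> \<in> \<A>" unfolding \<A>_def by blast
  qed
  then obtain G where G: "dominated_linear_graph V p G" "G0 \<subseteq> G"
    and maximal: "\<And>G'. dominated_linear_graph V p G' \<Longrightarrow> G \<subseteq> G' \<Longrightarrow> G' = G"
    unfolding \<A>_def by (metis (mono_tags, lifting) mem_Collect_eq order_trans)
  have "X \<in> Domain G" if X: "X \<in> V" for X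
  proof -
    obtain G' where "dominated_linear_graph V p G'" "G \<subseteq> G'" "X \<in> Domain G'"
      using dominated_linear_graph_extend[OF G(1) _ X] G(2) G0(2) by blast
    then show ?thesis using maximal by blast
  qed
  with G show thesis using that by blast
qed

theorem hahn_banach_fun_subspace:
  assumes x0: "x0 \<in> V"
  obtains L where "linear_functional_on V L" "\<And>X. X \<in> V \<Longrightarrow> L X \<le> p X" "L x0 = p x0"
proof -
  let ?G0 = "{((\<lambda>\<omega>. t * x0 \<omega>), t * p x0) | t. True}"
  have x0G0: "(x0, p x0) \<in> ?G0"
    by (intro CollectI exI[of _ 1]) simp
  then have "?G0 \<noteq> {}" by blast
  then obtain G where G: "dominated_linear_graph V p G" and G0: "?G0 \<subseteq> G"
    and total: "V \<subseteq> Domain G"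
    by (rule dominated_linear_graph_total_extension[OF dominated_linear_graph_ray[OF x0]])
  have x0G: "(x0, p x0) \<in> G" using x0G0 G0 by blast
  define L where "L X = (THE a. (X, a) \<in> G)" for X
  have L_eq: "L X = a" if "(X, a) \<in> G" for X a
    unfolding L_def using that by (auto intro: dominated_linear_graph_unique[OF G])
  have L_in: "(X, L X) \<in> G" if X: "X \<in> V" for X
  proof -
    obtain a where "(X, a) \<in> G" using total X by blast
    then show ?thesis using L_eq by simp
  qed
  show thesis
  proof (rule that)
    show "linear_functional_on V L"
      unfolding linear_functional_on_def
      by (auto intro!: L_eq dominated_linear_graph_add[OF G] dominated_linear_graph_scale[OF G] L_in)
    show "L X \<le> p X" if "X \<in> V" for X
      using dominated_linear_graph_le[OF G L_in[OF that]] .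
    show "L x0 = p x0" using L_eq x0G .
  qed
qed

end

section \<open>Finitely additive expectations\<close>

lemma Bb_iff_abs_bounded: "X \<in> Bb M \<longleftrightarrow> X \<in> borel_measurable M \<and> (\<exists>B. \<forall>\<omega>\<in>space M. \<bar>X \<omega>\<bar> \<le> B)"
  unfolding Bb_def bounded_iff by auto

lemma Bb_bounds:
  assumes "X \<in> Bb M"
  obtains B where "\<And>\<omega>. \<omega> \<in> space M \<Longrightarrow> - B \<le> X \<omega>" "\<And>\<omega>. \<omega> \<in> space M \<Longrightarrow> X \<omega> \<le> B"
  using assms unfolding Bb_iff_abs_bounded abs_le_iff by (metis minus_le_iff)

lemma fun_subspace_Bb: "fun_subspace (Bb M)"
  unfolding fun_subspace_def Bb_def
  using bounded_plus_comp bounded_scaleR_comp[where 'b=real] by (auto simp: image_constant_conv)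

lemma Bb_add: "X \<in> Bb M \<Longrightarrow> Y \<in> Bb M \<Longrightarrow> (\<lambda>\<omega>. X \<omega> + Y \<omega>) \<in> Bb M"
  and Bb_scale: "X \<in> Bb M \<Longrightarrow> (\<lambda>\<omega>. c * X \<omega>) \<in> Bb M"
  and Bb_diff: "X \<in> Bb M \<Longrightarrow> Y \<in> Bb M \<Longrightarrow> (\<lambda>\<omega>. X \<omega> - Y \<omega>) \<in> Bb M"
  using fun_subspace_add fun_subspace_scale fun_subspace_diff fun_subspace_Bb by blast+

lemma Bb_const: "(\<lambda>\<omega>. c) \<in> Bb M"
  unfolding Bb_iff_abs_bounded by auto

lemma Bb_indicator: "A \<in> sets M \<Longrightarrow> (indicator A :: 'a \<Rightarrow> real) \<in> Bb M"
  unfolding Bb_iff_abs_bounded by (auto intro!: exI[of _ 1] simp: indicator_def)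

lemma simple_fn_Bb: "simple_fn M s \<Longrightarrow> s \<in> Bb M"
  unfolding simple_fn_def Bb_def by (auto intro: finite_imp_bounded)

lemma simple_fn_const: "simple_fn M (\<lambda>\<omega>. c)"
  unfolding simple_fn_def by (auto intro: finite_subset[of _ "{c}"])

lemma simple_fn_level_set: "simple_fn M s \<Longrightarrow> s -` {y} \<inter> space M \<in> sets M"
  unfolding simple_fn_def by (auto intro: measurable_sets)

lemma simple_fn_approx_below:
  assumes X: "X \<in> Bb M" and e: "0 < e"
  obtains s where "simple_fn M s" "\<And>\<omega>. s \<omega> \<le> X \<omega>" "\<And>\<omega>. X \<omega> \<le> s \<omega> + e"
proof
  obtain B where B: "\<And>\<omega>. \<omega> \<in> space M \<Longrightarrow> - B \<le> X \<omega>" "\<And>\<omega>. \<omega> \<in> space M \<Longrightarrow> X \<omega> \<le> B"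
    using Bb_bounds[OF X] by blast
  define s where "s \<omega> = e * of_int \<lfloor>X \<omega> / e\<rfloor>" for \<omega>
  have "s ` space M \<subseteq> (\<lambda>k. e * of_int k) ` {\<lfloor>- B / e\<rfloor>..\<lfloor>B / e\<rfloor>}"
    using B e unfolding s_def by (auto intro!: imageI floor_mono simp: field_simps)
  then have "finite (s ` space M)" by (rule finite_subset) simp
  moreover have "X \<in> borel_measurable M" using X unfolding Bb_def by simp
  then have "s \<in> borel_measurable M" unfolding s_def by measurable
  ultimately show "simple_fn M s" unfolding simple_fn_def by simp
  show "s \<omega> \<le> X \<omega>" "X \<omega> \<le> s \<omega> + e" for \<omega>
    using e mult_left_mono[OF of_int_floor_le[of "X \<omega> / e"], of e]
      mult_left_mono[OF less_imp_le[OF real_of_int_floor_add_one_gt[of "X \<omega> / e"]], of e]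
    by (simp_all add: s_def algebra_simps)
qed

lemma ba1_sum_level_sets:
  assumes P: "P \<in> ba1 M" and s: "simple_fn M s"
  shows "(\<Sum>y\<in>s ` space M. P (s -` {y} \<inter> space M)) = 1"
proof -
  have add: "\<And>A B. A \<in> sets M \<Longrightarrow> B \<in> sets M \<Longrightarrow> A \<inter> B = {} \<Longrightarrow> P (A \<union> B) = P A + P B"
    using P unfolding ba1_def by blast
  have "(\<Sum>y\<in>F. P (s -` {y} \<inter> space M)) = P (s -` F \<inter> space M)" if "finite F" for F
    using that
  proof (induction F rule: finite_induct)
    case empty
    show ?case using add[of "{}" "{}"] by simp
  next
    case (insert y F)
    have "s -` F \<inter> space M \<in> sets M"
      using s insert(1) unfolding simple_fn_def by (auto intro!: measurable_sets borel_closed finite_imp_closed)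
    moreover have "s -` insert y F \<inter> space M = (s -` {y} \<inter> space M) \<union> (s -` F \<inter> space M)"
      and "(s -` {y} \<inter> space M) \<inter> (s -` F \<inter> space M) = {}"
      using insert(2) by auto
    ultimately show ?case
      using insert(1-3) add[OF simple_fn_level_set[OF s]] by simp
  qed
  moreover have "s -` (s ` space M) \<inter> space M = space M" by auto
  ultimately show ?thesis
    using s P unfolding simple_fn_def ba1_def by simp
qed

lemma simple_int_le_const:
  assumes P: "P \<in> ba1 M" and s: "simple_fn M s" and b: "\<And>\<omega>. \<omega> \<in> space M \<Longrightarrow> s \<omega> \<le> b"
  shows "simple_int M P s \<le> b"
proof -
  have "simple_int M P s \<le> (\<Sum>y\<in>s ` space M. b * P (s -` {y} \<inter> space M))"
    unfolding simple_int_def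
  proof (rule sum_mono)
    fix y assume "y \<in> s ` space M"
    moreover have "0 \<le> P (s -` {y} \<inter> space M)"
      using P simple_fn_level_set[OF s] unfolding ba1_def by blast
    ultimately show "y * P (s -` {y} \<inter> space M) \<le> b * P (s -` {y} \<inter> space M)"
      using b by (auto intro: mult_right_mono)
  qed
  also have "\<dots> = b" using ba1_sum_level_sets[OF P s] by (simp add: sum_distrib_left[symmetric])
  finally show ?thesis .
qed

lemma fa_expect_upper:
  assumes P: "P \<in> ba1 M" and X: "X \<in> Bb M"
    and s: "simple_fn M s" "\<And>\<omega>. \<omega> \<in> space M \<Longrightarrow> s \<omega> \<le> X \<omega>"
  shows "simple_int M P s \<le> fa_expect M P X"
proof -
  obtain B where B: "\<And>\<omega>. \<omega> \<in> space M \<Longrightarrow> X \<omega> \<le> B" using Bb_bounds[OF X] by blast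
  have "simple_int M P s' \<le> B" if "simple_fn M s'" "\<forall>\<omega>\<in>space M. s' \<omega> \<le> X \<omega>" for s'
    by (rule simple_int_le_const[OF P that(1)]) (use B that(2) in force)
  then have "bdd_above {simple_int M P s | s. simple_fn M s \<and> (\<forall>\<omega>\<in>space M. s \<omega> \<le> X \<omega>)}"
    unfolding bdd_above_def by blast
  then show ?thesis
    unfolding fa_expect_def using s by (auto intro!: cSup_upper)
qed

lemma fa_expect_least:
  assumes X: "X \<in> Bb M"
    and b: "\<And>s. simple_fn M s \<Longrightarrow> (\<And>\<omega>. \<omega> \<in> space M \<Longrightarrow> s \<omega> \<le> X \<omega>) \<Longrightarrow> simple_int M P s \<le> b"
  shows "fa_expect M P X \<le> b"
proof -
  obtain B where B: "\<And>\<omega>. \<omega> \<in> space M \<Longrightarrow> - B \<le> X \<omega>" using Bb_bounds[OF X] by blast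
  then have "{simple_int M P s | s. simple_fn M s \<and> (\<forall>\<omega>\<in>space M. s \<omega> \<le> X \<omega>)} \<noteq> {}"
    using simple_fn_const[of M "- B"] by blast
  then show ?thesis
    unfolding fa_expect_def using b by (auto intro!: cSup_least)
qed

lemma fa_expect_mono:
  assumes P: "P \<in> ba1 M" and X: "X \<in> Bb M" and Y: "Y \<in> Bb M"
    and le: "\<And>\<omega>. \<omega> \<in> space M \<Longrightarrow> X \<omega> \<le> Y \<omega>"
  shows "fa_expect M P X \<le> fa_expect M P Y"
proof (rule fa_expect_least[OF X])
  fix s assume "simple_fn M s" "\<And>\<omega>. \<omega> \<in> space M \<Longrightarrow> s \<omega> \<le> X \<omega>"
  then show "simple_int M P s \<le> fa_expect M P Y"
    using le by (intro fa_expect_upper[OF P Y]) (auto intro: order_trans)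
qed

definition fa_measure_of :: "'a measure \<Rightarrow> (('a \<Rightarrow> real) \<Rightarrow> real) \<Rightarrow> 'a set \<Rightarrow> real" where
  "fa_measure_of M L A = (if A \<in> sets M then L (indicator A) else 0)"

context
  fixes M :: "'a measure" and L :: "('a \<Rightarrow> real) \<Rightarrow> real"
  assumes L: "linear_functional_on (Bb M) L"
    and L_mono: "\<And>X Y. X \<in> Bb M \<Longrightarrow> Y \<in> Bb M \<Longrightarrow> (\<And>\<omega>. \<omega> \<in> space M \<Longrightarrow> X \<omega> \<le> Y \<omega>) \<Longrightarrow> L X \<le> L Y"
    and L_one: "L (\<lambda>\<omega>. 1) = 1"
begin

lemma positive_functional_const: "L (\<lambda>\<omega>. c) = c"
  using linear_functional_on_scale[OF L Bb_const, of c 1] L_one by simp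

lemma positive_functional_cong:
  "X \<in> Bb M \<Longrightarrow> Y \<in> Bb M \<Longrightarrow> (\<And>\<omega>. \<omega> \<in> space M \<Longrightarrow> X \<omega> = Y \<omega>) \<Longrightarrow> L X = L Y"
  using L_mono[of X Y] L_mono[of Y X] by fastforce

lemma fa_measure_of_ba1: "fa_measure_of M L \<in> ba1 M"
  unfolding ba1_def
proof (intro CollectI conjI ballI allI impI)
  fix A assume A: "A \<in> sets M"
  have "L (\<lambda>\<omega>. 0) \<le> L (indicator A)"
    using Bb_indicator[OF A] by (intro L_mono Bb_const) auto
  then show "0 \<le> fa_measure_of M L A"
    using A positive_functional_const[of 0] by (simp add: fa_measure_of_def)
next
  show "fa_measure_of M L (space M) = 1"
    using positive_functional_cong[OF Bb_indicator[OF sets.top] Bb_const, of 1] L_one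
    by (simp add: fa_measure_of_def)
next
  fix A B assume A: "A \<in> sets M" and B: "B \<in> sets M" and "A \<inter> B = {}"
  then have "(indicator (A \<union> B) :: 'a \<Rightarrow> real) = (\<lambda>\<omega>. indicator A \<omega> + indicator B \<omega>)"
    by (auto simp: indicator_def fun_eq_iff)
  then show "fa_measure_of M L (A \<union> B) = fa_measure_of M L A + fa_measure_of M L B"
    using A B linear_functional_on_add[OF L Bb_indicator[OF A] Bb_indicator[OF B]]
    by (simp add: fa_measure_of_def)
qed (simp add: fa_measure_of_def)

lemma simple_int_fa_measure_of:
  assumes s: "simple_fn M s"
  shows "simple_int M (fa_measure_of M L) s = L s"
proof -
  define A where "A y = s -` {y} \<inter> space M" for y
  have A: "A y \<in> sets M" for y unfolding A_def by (rule simple_fn_level_set[OF s])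
  have fin: "finite (s ` space M)" using s unfolding simple_fn_def by blast
  have in_Bb: "(\<lambda>\<omega>. y * indicator (A y) \<omega>) \<in> Bb M" for y
    by (rule Bb_scale[OF Bb_indicator[OF A]])
  have sum: "(\<lambda>\<omega>. \<Sum>y\<in>s ` space M. y * indicator (A y) \<omega>) \<in> Bb M \<and>
      L (\<lambda>\<omega>. \<Sum>y\<in>s ` space M. y * indicator (A y) \<omega>) = (\<Sum>y\<in>s ` space M. L (\<lambda>\<omega>. y * indicator (A y) \<omega>))"
    by (rule linear_functional_on_sum[OF fun_subspace_Bb L fin in_Bb])
  have "s \<omega> = (\<Sum>y\<in>s ` space M. y * indicator (A y) \<omega>)" if "\<omega> \<in> space M" for \<omega>
  proof -
    have "(\<Sum>y\<in>s ` space M. y * indicator (A y) \<omega>) = (\<Sum>y\<in>s ` space M. if y = s \<omega> then y else 0)"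
      using that by (intro sum.cong) (auto simp: A_def)
    also have "\<dots> = s \<omega>" using that fin by simp
    finally show ?thesis by simp
  qed
  then have "L s = L (\<lambda>\<omega>. \<Sum>y\<in>s ` space M. y * indicator (A y) \<omega>)"
    by (intro positive_functional_cong simple_fn_Bb[OF s] conjunct1[OF sum])
  also have "\<dots> = (\<Sum>y\<in>s ` space M. y * fa_measure_of M L (A y))"
    unfolding conjunct2[OF sum] fa_measure_of_def
    using linear_functional_on_scale[OF L Bb_indicator[OF A]] A by simp
  finally show ?thesis unfolding simple_int_def A_def by simp
qed

lemma fa_expect_fa_measure_of:
  assumes X: "X \<in> Bb M"
  shows "fa_expect M (fa_measure_of M L) X = L X"
proof (rule antisym)
  show "fa_expect M (fa_measure_of M L) X \<le> L X"
  proof (rule fa_expect_least[OF X])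
    fix s assume "simple_fn M s" "\<And>\<omega>. \<omega> \<in> space M \<Longrightarrow> s \<omega> \<le> X \<omega>"
    then show "simple_int M (fa_measure_of M L) s \<le> L X"
      using simple_int_fa_measure_of L_mono[OF simple_fn_Bb X] by simp
  qed
next
  show "L X \<le> fa_expect M (fa_measure_of M L) X"
  proof (rule field_le_epsilon)
    fix e :: real assume "0 < e"
    then obtain s where s: "simple_fn M s" "\<And>\<omega>. s \<omega> \<le> X \<omega>" "\<And>\<omega>. X \<omega> \<le> s \<omega> + e"
      using simple_fn_approx_below[OF X] by blast
    have "L X \<le> L (\<lambda>\<omega>. s \<omega> + e)"
      using s(3) by (intro L_mono X Bb_add simple_fn_Bb[OF s(1)] Bb_const)
    also have "\<dots> = L s + e"
      using linear_functional_on_add[OF L simple_fn_Bb[OF s(1)] Bb_const] positive_functional_const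
      by simp
    also have "L s \<le> fa_expect M (fa_measure_of M L) X"
      using fa_expect_upper[OF fa_measure_of_ba1 X s(1)] s(2) simple_int_fa_measure_of[OF s(1)]
      by simp
    finally show "L X \<le> fa_expect M (fa_measure_of M L) X + e" by simp
  qed
qed

end

section \<open>The superhedging price of a sublinear premium principle\<close>

definition superhedging_price ::
    "'a measure \<Rightarrow> ('a \<Rightarrow> real) set \<Rightarrow> (('a \<Rightarrow> real) \<Rightarrow> real) \<Rightarrow> ('a \<Rightarrow> real) \<Rightarrow> real" where
  "superhedging_price M C H X = Inf {H X0 | X0. X0 \<in> C \<and> (\<forall>\<omega>\<in>space M. X \<omega> \<le> X0 \<omega>)}"

locale sublinear_premium_space =
  fixes M :: "'a measure" and C :: "('a \<Rightarrow> real) set" and H :: "('a \<Rightarrow> real) \<Rightarrow> real"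
  assumes C_Bb: "C \<subseteq> Bb M"
    and C_add: "\<And>X Y. X \<in> C \<Longrightarrow> Y \<in> C \<Longrightarrow> (\<lambda>\<omega>. X \<omega> + Y \<omega>) \<in> C"
    and C_scale: "\<And>X a. X \<in> C \<Longrightarrow> (\<lambda>\<omega>. a * X \<omega>) \<in> C"
    and C_const: "\<And>c. (\<lambda>\<omega>. c) \<in> C"
    and H: "sublinear_premium_principle M C H"
begin

abbreviation R_max :: "('a \<Rightarrow> real) \<Rightarrow> real" where
  "R_max \<equiv> superhedging_price M C H"

lemma H_cash: "X \<in> C \<Longrightarrow> H (\<lambda>\<omega>. X \<omega> + m) = H X + m"
  and H_zero: "H (\<lambda>\<omega>. 0) = 0"
  and H_nonneg: "X \<in> C \<Longrightarrow> (\<And>\<omega>. \<omega> \<in> space M \<Longrightarrow> 0 \<le> X \<omega>) \<Longrightarrow> 0 \<le> H X"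
  and H_convex: "X \<in> C \<Longrightarrow> Y \<in> C \<Longrightarrow> 0 \<le> l \<Longrightarrow> l \<le> 1 \<Longrightarrow>
    H (\<lambda>\<omega>. l * X \<omega> + (1 - l) * Y \<omega>) \<le> l * H X + (1 - l) * H Y"
  and H_pos_homogeneous: "X \<in> C \<Longrightarrow> 0 < l \<Longrightarrow> H (\<lambda>\<omega>. l * X \<omega>) = l * H X"
  using H unfolding sublinear_premium_principle_def premium_principle_def convex_on_C_def by blast+

lemma H_const: "H (\<lambda>\<omega>. c) = c"
  using H_cash[OF C_const[of 0], of c] H_zero by simp

lemma H_ge_lower_bound:
  assumes X: "X \<in> C" and b: "\<And>\<omega>. \<omega> \<in> space M \<Longrightarrow> b \<le> X \<omega>"
  shows "b \<le> H X"
  using H_nonneg[OF C_add[OF X C_const[of "- b"]]] H_cash[OF X, of "- b"] b by simp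

lemma H_subadditive:
  assumes X: "X \<in> C" and Y: "Y \<in> C"
  shows "H (\<lambda>\<omega>. X \<omega> + Y \<omega>) \<le> H X + H Y"
  using H_convex[OF C_scale[OF X, of 2] C_scale[OF Y, of 2], of "1 / 2"]
    H_pos_homogeneous[OF X, of 2] H_pos_homogeneous[OF Y, of 2] by simp

lemma superhedging_price_le:
  assumes X: "X \<in> Bb M" and X0: "X0 \<in> C" "\<And>\<omega>. \<omega> \<in> space M \<Longrightarrow> X \<omega> \<le> X0 \<omega>"
  shows "R_max X \<le> H X0"
proof -
  obtain B where B: "\<And>\<omega>. \<omega> \<in> space M \<Longrightarrow> - B \<le> X \<omega>" using Bb_bounds[OF X] by blast
  have "- B \<le> H Y" if "Y \<in> C" "\<forall>\<omega>\<in>space M. X \<omega> \<le> Y \<omega>" for Y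
    using that B by (intro H_ge_lower_bound) force+
  then have bdd: "bdd_below {H X0 | X0. X0 \<in> C \<and> (\<forall>\<omega>\<in>space M. X \<omega> \<le> X0 \<omega>)}"
    unfolding bdd_below_def by blast
  show ?thesis
    unfolding superhedging_price_def by (rule cInf_lower[OF _ bdd]) (use X0 in blast)
qed

lemma superhedging_price_greatest:
  assumes X: "X \<in> Bb M"
    and b: "\<And>X0. X0 \<in> C \<Longrightarrow> (\<And>\<omega>. \<omega> \<in> space M \<Longrightarrow> X \<omega> \<le> X0 \<omega>) \<Longrightarrow> b \<le> H X0"
  shows "b \<le> R_max X"
proof -
  obtain B where B: "\<And>\<omega>. \<omega> \<in> space M \<Longrightarrow> X \<omega> \<le> B" using Bb_bounds[OF X] by blast
  then have "{H X0 | X0. X0 \<in> C \<and> (\<forall>\<omega>\<in>space M. X \<omega> \<le> X0 \<omega>)} \<noteq> {}"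
    using C_const[of B] by blast
  then show ?thesis
    unfolding superhedging_price_def by (rule cInf_greatest) (use b in force)
qed

lemma superhedging_price_le_const:
  assumes X: "X \<in> Bb M" and c: "\<And>\<omega>. \<omega> \<in> space M \<Longrightarrow> X \<omega> \<le> c"
  shows "R_max X \<le> c"
  using superhedging_price_le[OF X C_const[of c] c] H_const by simp

lemma superhedging_price_const: "R_max (\<lambda>\<omega>. c) = c"
proof (rule antisym)
  show "R_max (\<lambda>\<omega>. c) \<le> c" by (rule superhedging_price_le_const[OF Bb_const]) simp
  show "c \<le> R_max (\<lambda>\<omega>. c)" by (rule superhedging_price_greatest[OF Bb_const], rule H_ge_lower_bound)
qed

lemma superhedging_price_mono:
  assumes X: "X \<in> Bb M" and Y: "Y \<in> Bb M" and le: "\<And>\<omega>. \<omega> \<in> space M \<Longrightarrow> X \<omega> \<le> Y \<omega>"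
  shows "R_max X \<le> R_max Y"
proof (rule superhedging_price_greatest[OF Y])
  fix X0 assume "X0 \<in> C" "\<And>\<omega>. \<omega> \<in> space M \<Longrightarrow> Y \<omega> \<le> X0 \<omega>"
  then show "R_max X \<le> H X0"
    using le by (intro superhedging_price_le[OF X]) (auto intro: order_trans)
qed

lemma superhedging_price_cash_le:
  assumes X: "X \<in> Bb M"
  shows "R_max (\<lambda>\<omega>. X \<omega> + m) \<le> R_max X + m"
proof -
  have "R_max (\<lambda>\<omega>. X \<omega> + m) - m \<le> H X0"
    if X0: "X0 \<in> C" "\<And>\<omega>. \<omega> \<in> space M \<Longrightarrow> X \<omega> \<le> X0 \<omega>" for X0
  proof -
    have "R_max (\<lambda>\<omega>. X \<omega> + m) \<le> H (\<lambda>\<omega>. X0 \<omega> + m)"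
      by (rule superhedging_price_le[OF Bb_add[OF X Bb_const] C_add[OF X0(1) C_const]]) (use X0(2) in simp)
    then show ?thesis using H_cash[OF X0(1)] by simp
  qed
  then show ?thesis using superhedging_price_greatest[OF X] by fastforce
qed

lemma superhedging_price_cash:
  assumes X: "X \<in> Bb M"
  shows "R_max (\<lambda>\<omega>. X \<omega> + m) = R_max X + m"
  using superhedging_price_cash_le[OF X, of m]
    superhedging_price_cash_le[OF Bb_add[OF X Bb_const], of m "- m"] by simp

lemma superhedging_price_pos_homogeneous_le:
  assumes X: "X \<in> Bb M" and l: "0 < l"
  shows "R_max (\<lambda>\<omega>. l * X \<omega>) \<le> l * R_max X"
proof -
  have "R_max (\<lambda>\<omega>. l * X \<omega>) / l \<le> H X0"
    if X0: "X0 \<in> C" "\<And>\<omega>. \<omega> \<in> space M \<Longrightarrow> X \<omega> \<le> X0 \<omega>" for X0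
  proof -
    have "R_max (\<lambda>\<omega>. l * X \<omega>) \<le> H (\<lambda>\<omega>. l * X0 \<omega>)"
      by (rule superhedging_price_le[OF Bb_scale[OF X] C_scale[OF X0(1)]]) (use X0(2) l in simp)
    then show ?thesis using H_pos_homogeneous[OF X0(1) l] l by (simp add: pos_divide_le_eq mult.commute)
  qed
  then have "R_max (\<lambda>\<omega>. l * X \<omega>) / l \<le> R_max X"
    by (rule superhedging_price_greatest[OF X])
  then show ?thesis using l by (simp add: pos_divide_le_eq mult.commute)
qed

lemma superhedging_price_pos_homogeneous:
  assumes X: "X \<in> Bb M" and l: "0 < l"
  shows "R_max (\<lambda>\<omega>. l * X \<omega>) = l * R_max X"
proof (rule antisym)
  have "(\<lambda>\<omega>. (1 / l) * (l * X \<omega>)) = X" using l by simp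
  then have "R_max X \<le> (1 / l) * R_max (\<lambda>\<omega>. l * X \<omega>)"
    using superhedging_price_pos_homogeneous_le[OF Bb_scale[OF X], of "1 / l" l] l by simp
  then show "l * R_max X \<le> R_max (\<lambda>\<omega>. l * X \<omega>)"
    using l by (simp add: pos_le_divide_eq mult.commute)
qed (rule superhedging_price_pos_homogeneous_le[OF X l])

lemma superhedging_price_subadditive:
  assumes X: "X \<in> Bb M" and Y: "Y \<in> Bb M"
  shows "R_max (\<lambda>\<omega>. X \<omega> + Y \<omega>) \<le> R_max X + R_max Y"
proof -
  have sum_le: "R_max (\<lambda>\<omega>. X \<omega> + Y \<omega>) - H X0 \<le> H Y0"
    if X0: "X0 \<in> C" "\<And>\<omega>. \<omega> \<in> space M \<Longrightarrow> X \<omega> \<le> X0 \<omega>"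
      and Y0: "Y0 \<in> C" "\<And>\<omega>. \<omega> \<in> space M \<Longrightarrow> Y \<omega> \<le> Y0 \<omega>" for X0 Y0
  proof -
    have "R_max (\<lambda>\<omega>. X \<omega> + Y \<omega>) \<le> H (\<lambda>\<omega>. X0 \<omega> + Y0 \<omega>)"
      by (rule superhedging_price_le[OF Bb_add[OF X Y] C_add[OF X0(1) Y0(1)]])
        (use X0(2) Y0(2) in \<open>auto intro: add_mono\<close>)
    also have "\<dots> \<le> H X0 + H Y0" by (rule H_subadditive[OF X0(1) Y0(1)])
    finally show ?thesis by simp
  qed
  have "R_max (\<lambda>\<omega>. X \<omega> + Y \<omega>) - R_max Y \<le> H X0"
    if X0: "X0 \<in> C" "\<And>\<omega>. \<omega> \<in> space M \<Longrightarrow> X \<omega> \<le> X0 \<omega>" for X0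
  proof -
    have "R_max (\<lambda>\<omega>. X \<omega> + Y \<omega>) - H X0 \<le> R_max Y"
      by (rule superhedging_price_greatest[OF Y]) (rule sum_le[OF X0])
    then show ?thesis by simp
  qed
  then have "R_max (\<lambda>\<omega>. X \<omega> + Y \<omega>) - R_max Y \<le> R_max X"
    by (rule superhedging_price_greatest[OF X])
  then show ?thesis by simp
qed

lemma coherent_superhedging_price: "coherent_risk_measure M R_max"
  unfolding coherent_risk_measure_def
  using superhedging_price_mono superhedging_price_cash superhedging_price_pos_homogeneous
    superhedging_price_subadditive by blast

lemma sublinear_superhedging_price: "sublinear_on (Bb M) R_max"
  unfolding sublinear_on_def
  using superhedging_price_subadditive superhedging_price_pos_homogeneous by blast

lemma fa_expect_le_superhedging_price:
  assumes P: "P \<in> ba1 M" and PH: "\<And>Y. Y \<in> C \<Longrightarrow> fa_expect M P Y \<le> H Y" and X: "X \<in> Bb M"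
  shows "fa_expect M P X \<le> R_max X"
proof (rule superhedging_price_greatest[OF X])
  fix X0 assume X0: "X0 \<in> C" "\<And>\<omega>. \<omega> \<in> space M \<Longrightarrow> X \<omega> \<le> X0 \<omega>"
  have "fa_expect M P X \<le> fa_expect M P X0"
    using X0 C_Bb by (intro fa_expect_mono[OF P X]) auto
  also have "\<dots> \<le> H X0" using PH[OF X0(1)] .
  finally show "fa_expect M P X \<le> H X0" .
qed

lemma superhedging_price_attained:
  assumes X: "X \<in> Bb M"
  obtains P where "P \<in> ba1 M" "\<And>Y. Y \<in> C \<Longrightarrow> fa_expect M P Y \<le> H Y"
    "fa_expect M P X = R_max X"
proof -
  obtain L where L: "linear_functional_on (Bb M) L" and L_le: "\<And>Y. Y \<in> Bb M \<Longrightarrow> L Y \<le> R_max Y"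
    and L_X: "L X = R_max X"
    using hahn_banach_fun_subspace[OF fun_subspace_Bb sublinear_superhedging_price X] by blast
  have L_diff: "L (\<lambda>\<omega>. Y \<omega> - Z \<omega>) = L Y - L Z" if "Y \<in> Bb M" "Z \<in> Bb M" for Y Z
    using linear_functional_on_add[OF L that(1) Bb_scale[OF that(2), of "- 1"]]
      linear_functional_on_scale[OF L that(2), of "- 1"] by simp
  have L_mono: "L Y \<le> L Z"
    if YZ: "Y \<in> Bb M" "Z \<in> Bb M" "\<And>\<omega>. \<omega> \<in> space M \<Longrightarrow> Y \<omega> \<le> Z \<omega>" for Y Z
  proof -
    have "L Y - L Z \<le> R_max (\<lambda>\<omega>. Y \<omega> - Z \<omega>)"
      using L_le[OF Bb_diff[OF YZ(1,2)]] L_diff[OF YZ(1,2)] by simp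
    also have "\<dots> \<le> 0" using YZ by (intro superhedging_price_le_const Bb_diff) auto
    finally show ?thesis by simp
  qed
  have L_one: "L (\<lambda>\<omega>. 1) = 1"
    using L_le[OF Bb_const, of 1] L_le[OF Bb_const, of "- 1"]
      linear_functional_on_scale[OF L Bb_const, of "- 1" 1] superhedging_price_const by simp
  let ?P = "fa_measure_of M L"
  have E: "fa_expect M ?P Y = L Y" if "Y \<in> Bb M" for Y
    using fa_expect_fa_measure_of[OF L L_mono L_one that] .
  show thesis
  proof (rule that)
    show "?P \<in> ba1 M" using fa_measure_of_ba1[OF L L_mono L_one] .
    show "fa_expect M ?P Y \<le> H Y" if Y: "Y \<in> C" for Y
    proof -
      have YB: "Y \<in> Bb M" using Y C_Bb by blast
      have "fa_expect M ?P Y = L Y" by (rule E[OF YB])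
      also have "\<dots> \<le> R_max Y" by (rule L_le[OF YB])
      also have "\<dots> \<le> H Y" by (rule superhedging_price_le[OF YB Y]) simp
      finally show ?thesis .
    qed
    show "fa_expect M ?P X = R_max X" using E[OF X] L_X by simp
  qed
qed

end

theorem corollary3p3:
  fixes M :: "'a measure" and C :: "('a \<Rightarrow> real) set" and H :: "('a \<Rightarrow> real) \<Rightarrow> real"
  assumes C_sub: "C \<subseteq> Bb M"
    and C_add: "\<And>X Y. X \<in> C \<Longrightarrow> Y \<in> C \<Longrightarrow> (\<lambda>\<omega>. X \<omega> + Y \<omega>) \<in> C"
    and C_smult: "\<And>X a. X \<in> C \<Longrightarrow> (\<lambda>\<omega>. a * X \<omega>) \<in> C"
    and C_const: "\<And>c. (\<lambda>\<omega>. c) \<in> C"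
    and H: "sublinear_premium_principle M C H"
  defines "R \<equiv> \<lambda>X. Inf {H X0 | X0. X0 \<in> C \<and> (\<forall>\<omega>\<in>space M. X \<omega> \<le> X0 \<omega>)}"
    and "\<P> \<equiv> {P \<in> ba1 M. \<forall>X\<in>C. fa_expect M P X \<le> H X}"
  shows "coherent_risk_measure M R \<and>
         (\<forall>X\<in>Bb M. (\<exists>P\<in>\<P>. R X = fa_expect M P X) \<and> (\<forall>P\<in>\<P>. fa_expect M P X \<le> R X))"
proof -
  interpret sublinear_premium_space M C H
    using assms(1-5) by unfold_locales
  have R: "R = superhedging_price M C H"
    unfolding R_def superhedging_price_def ..
  have attained: "\<exists>P\<in>\<P>. R X = fa_expect M P X" if X: "X \<in> Bb M" for X
  proof -
    obtain P where "P \<in> ba1 M" "\<And>Y. Y \<in> C \<Longrightarrow> fa_expect M P Y \<le> H Y"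
      and "fa_expect M P X = superhedging_price M C H X"
      using superhedging_price_attained[OF X] by blast
    then show ?thesis unfolding R \<P>_def by auto
  qed
  have bounded: "fa_expect M P X \<le> R X" if X: "X \<in> Bb M" and P: "P \<in> \<P>" for X P
  proof -
    from P have "P \<in> ba1 M" "\<And>Y. Y \<in> C \<Longrightarrow> fa_expect M P Y \<le> H Y" unfolding \<P>_def by auto
    then show ?thesis unfolding R by (rule fa_expect_le_superhedging_price[OF _ _ X])
  qed
  show ?thesis
    using coherent_superhedging_price[folded R] attained bounded by blast
qed

end
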